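(* Let $h:(\mathbb{R}^n,0)\to(\mathbb{R}^n,0)$ be a bi-Lipschitz homeomorphism germ, and let $A\subset\mathbb{R}^n$ be a set-germ at $0$ with $0\in\overline{A}$. Then [$LD(h(A))=LD(h(LD(A)))$ and $h(LD(A))$ satisfies condition (SSP)] if and only if [$LD(h^{-1}(LD(h(A))))=LD(A)$ and $h^{-1}(LD(h(A)))$ satisfies condition (SSP)].
   Context: For a set-germ $A\subset\mathbb{R}^n$ at $0$ with $0\in\overline A$, $D(A)=\{a\in S^{n-1}:\exists\, x_i\in A\setminus\{0\},\ x_i\to0,\ x_i/\|x_i\|\to a\}$ and $LD(A)=\{ta:a\in D(A),t\ge0\}$. For sequences, $\|u_m\|\ll\|v_m\|,\|w_m\|$ means $\|u_m\|/\|v_m\|\to0$ and $\|u_m\|/\|w_m\|\to0$. $A$ satisfies condition (SSP) if for every sequence $a_m\in\mathbb{R}^n$ tending to $0$ with $\lim a_m/\|a_m\|\in D(A)$ there is a sequence $b_m\in A$ with $\|a_m-b_m\|\ll\|a_m\|,\|b_m\|$. A bi-Lipschitz homeomorphism germ is a homeomorphism germ $h$ with $h(0)=0$ and constants $0<K_1\le K_2$ with $K_1\|x-y\|\le\|h(x)-h(y)\|\le K_2\|x-y\|$ near $0$. *)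

theory Defs
  imports "HOL-Analysis.Analysis"
begin

definition dirs :: "'a::real_normed_vector set \<Rightarrow> 'a set" where
  "dirs A = {a \<in> sphere 0 1. \<exists>x. (\<forall>i. x i \<in> A - {0}) \<and> x \<longlonglongrightarrow> 0 \<and>
                 (\<lambda>i. x i /\<^sub>R norm (x i)) \<longlonglongrightarrow> a}"

definition LD :: "'a::real_normed_vector set \<Rightarrow> 'a set" where
  "LD A = {t *\<^sub>R a | t a. a \<in> dirs A \<and> t \<ge> 0}"

definition SSP :: "'a::real_normed_vector set \<Rightarrow> bool" where
  "SSP A \<longleftrightarrow> (\<forall>a :: nat \<Rightarrow> 'a. a \<longlonglongrightarrow> 0 \<and>
      (\<exists>u \<in> dirs A. (\<lambda>m. a m /\<^sub>R norm (a m)) \<longlonglongrightarrow> u) \<longrightarrow>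
      (\<exists>b. (\<forall>m. b m \<in> A) \<and>
           (\<lambda>m. norm (a m - b m) / norm (a m)) \<longlonglongrightarrow> 0 \<and>
           (\<lambda>m. norm (a m - b m) / norm (b m)) \<longlonglongrightarrow> 0))"

end

theory Submission
  imports Defs
begin

text \<open>
  Say that Y is asymptotically approximated by X at 0 if every y \<in> Y near 0 lies within o(|y|)
  of X. For a cone E, the two conditions LD X = E and (SSP) for X together say exactly that X
  and E approximate each other (compactness of the unit sphere turns the sequential condition (SSP)
  into this uniform one). Mutual approximation is preserved by bi-Lipschitz maps fixing 0 and is
  unaffected by cutting the sets down to a neighbourhood of 0. Hence both sides of the equivalence
  state that h(LD A \<inter> U) and LD(h(A)) approximate each other, once before and once after
  applying the inverse g.
\<close>

lemma norm_normalize_diff_le: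
  fixes x y :: "'a::real_normed_vector"
  assumes "x \<noteq> 0" "y \<noteq> 0"
  shows "norm (x /\<^sub>R norm x - y /\<^sub>R norm y) \<le> 2 * norm (x - y) / norm y"
proof -
  have ny: "norm y > 0" and nx: "norm x > 0" using assms by simp_all
  have "x /\<^sub>R norm x - y /\<^sub>R norm y = (x - y) /\<^sub>R norm y + ((norm y - norm x) / norm y) *\<^sub>R (x /\<^sub>R norm x)"
    using nx ny by (simp add: algebra_simps divide_inverse)
  then have "norm (x /\<^sub>R norm x - y /\<^sub>R norm y)
      \<le> norm ((x - y) /\<^sub>R norm y) + norm (((norm y - norm x) / norm y) *\<^sub>R (x /\<^sub>R norm x))"
    by (metis norm_triangle_ineq)
  also have "\<dots> = norm (x - y) / norm y + \<bar>norm y - norm x\<bar> / norm y"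
    using nx ny by (simp add: abs_mult divide_inverse_commute)
  also have "\<bar>norm y - norm x\<bar> \<le> norm (x - y)"
    by (metis norm_minus_commute norm_triangle_ineq3)
  finally show ?thesis using ny by (simp add: divide_right_mono)
qed

lemma dirs_iff:
  "u \<in> dirs X \<longleftrightarrow> norm u = 1 \<and>
     (\<forall>e>0. \<forall>d>0. \<exists>x\<in>X. x \<noteq> 0 \<and> norm x < d \<and> norm (x /\<^sub>R norm x - u) < e)"
proof
  assume "u \<in> dirs X"
  then obtain x where x: "\<forall>i. x i \<in> X - {0}" "x \<longlonglongrightarrow> 0" "(\<lambda>i. x i /\<^sub>R norm (x i)) \<longlonglongrightarrow> u"
    and "norm u = 1" by (auto simp: dirs_def)
  moreover have "\<exists>y\<in>X. y \<noteq> 0 \<and> norm y < d \<and> norm (y /\<^sub>R norm y - u) < e" if "e > 0" "d > 0" for e d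
  proof -
    have "\<forall>\<^sub>F i in sequentially. norm (x i) < d \<and> norm (x i /\<^sub>R norm (x i) - u) < e"
      using x(2,3) that by (auto simp: tendsto_iff dist_norm intro: eventually_conj)
    then obtain i where "norm (x i) < d \<and> norm (x i /\<^sub>R norm (x i) - u) < e"
      using eventually_sequentially by auto
    then show ?thesis using x(1) by blast
  qed
  ultimately show "norm u = 1 \<and>
      (\<forall>e>0. \<forall>d>0. \<exists>x\<in>X. x \<noteq> 0 \<and> norm x < d \<and> norm (x /\<^sub>R norm x - u) < e)"
    by blast
next
  assume H: "norm u = 1 \<and>
      (\<forall>e>0. \<forall>d>0. \<exists>x\<in>X. x \<noteq> 0 \<and> norm x < d \<and> norm (x /\<^sub>R norm x - u) < e)"
  then have "\<forall>n. \<exists>y\<in>X. y \<noteq> 0 \<and> norm y < 1 / Suc n \<and> norm (y /\<^sub>R norm y - u) < 1 / Suc n"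
    by simp
  then obtain x where x: "\<And>n. x n \<in> X \<and> x n \<noteq> 0 \<and> norm (x n) < 1 / Suc n \<and>
      norm (x n /\<^sub>R norm (x n) - u) < 1 / Suc n" by metis
  have "x \<longlonglongrightarrow> 0" by (rule LIMSEQ_norm_0) (use x in auto)
  moreover have "(\<lambda>n. x n /\<^sub>R norm (x n)) \<longlonglongrightarrow> u"
    by (rule LIM_zero_cancel, rule LIMSEQ_norm_0) (use x in auto)
  ultimately show "u \<in> dirs X" using x H unfolding dirs_def by auto
qed

lemma dirs_nearby_point:
  assumes "u \<in> dirs X" "e > 0" "d > 0"
  obtains x where "x \<in> X" "x \<noteq> 0" "norm x < d" "norm (x /\<^sub>R norm x - u) < e"
  using assms unfolding dirs_iff by blast

lemma scaleR_dirs_in_LD: "a \<in> dirs X \<Longrightarrow> 0 \<le> t \<Longrightarrow> t *\<^sub>R a \<in> LD X"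
  unfolding LD_def by blast

lemma normalize_in_dirs_if_LD:
  assumes "y \<in> LD X" "y \<noteq> 0" shows "y /\<^sub>R norm y \<in> dirs X"
proof -
  obtain t a where ta: "y = t *\<^sub>R a" "a \<in> dirs X" "t \<ge> 0" using assms(1) by (auto simp: LD_def)
  have "norm a = 1" using ta(2) by (simp add: dirs_def)
  moreover have "t \<noteq> 0" using ta assms(2) by auto
  ultimately show ?thesis using ta by simp
qed

lemma dirs_LD: "dirs (LD X) = dirs X"
proof
  show "dirs (LD X) \<subseteq> dirs X"
  proof
    fix u assume "u \<in> dirs (LD X)"
    then have "norm u = 1" and u: "\<forall>e>0. \<forall>d>0. \<exists>y\<in>LD X. y \<noteq> 0 \<and> norm y < d \<and> norm (y /\<^sub>R norm y - u) < e"
      by (auto simp: dirs_iff)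
    moreover have "\<exists>x\<in>X. x \<noteq> 0 \<and> norm x < d \<and> norm (x /\<^sub>R norm x - u) < e" if "e > 0" "d > 0" for e d
    proof -
      have "e/2 > 0" using that by simp
      then obtain y where y: "y \<in> LD X" "y \<noteq> 0" "norm y < d" "norm (y /\<^sub>R norm y - u) < e/2"
        using u[rule_format, OF _ \<open>d > 0\<close>] by blast
      have "y /\<^sub>R norm y \<in> dirs X" using y(1,2) by (rule normalize_in_dirs_if_LD)
      then obtain x where x: "x \<in> X" "x \<noteq> 0" "norm x < d" "norm (x /\<^sub>R norm x - y /\<^sub>R norm y) < e/2"
        using \<open>e/2 > 0\<close> \<open>d > 0\<close> by (rule dirs_nearby_point)
      have "norm (x /\<^sub>R norm x - u) < e/2 + e/2"
        by (rule norm_diff_triangle_less[OF x(4) y(4)])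
      then show ?thesis using x by (intro bexI[OF _ x(1)]) auto
    qed
    ultimately show "u \<in> dirs X" by (simp add: dirs_iff)
  qed
  show "dirs X \<subseteq> dirs (LD X)"
  proof
    fix u assume u: "u \<in> dirs X"
    then have nu: "norm u = 1" by (simp add: dirs_def)
    have "\<exists>x\<in>LD X. x \<noteq> 0 \<and> norm x < d \<and> norm (x /\<^sub>R norm x - u) < e" if "e > 0" "d > 0" for e d
      using that nu scaleR_dirs_in_LD[OF u, of "d/2"] by (intro bexI[of _ "(d/2) *\<^sub>R u"]) auto
    then show "u \<in> dirs (LD X)" using nu by (simp add: dirs_iff)
  qed
qed

lemma LD_LD: "LD (LD X) = LD X"
  unfolding LD_def[of "LD X"] dirs_LD by (simp add: LD_def)

definition asymp_approx :: "'a::real_normed_vector set \<Rightarrow> 'a set \<Rightarrow> bool" where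
  "asymp_approx Y X \<longleftrightarrow>
     (\<forall>e>0. \<exists>d>0. \<forall>y\<in>Y. 0 < norm y \<and> norm y < d \<longrightarrow> (\<exists>x\<in>X. norm (x - y) \<le> e * norm y))"

definition asymp_equiv :: "'a::real_normed_vector set \<Rightarrow> 'a set \<Rightarrow> bool" where
  "asymp_equiv X Y \<longleftrightarrow> asymp_approx X Y \<and> asymp_approx Y X"

lemma asymp_equiv_sym: "asymp_equiv X Y \<longleftrightarrow> asymp_equiv Y X"
  unfolding asymp_equiv_def by blast

lemma asymp_approx_mono:
  assumes "asymp_approx Y X" "Y' \<subseteq> Y" "X \<subseteq> X'"
  shows "asymp_approx Y' X'"
  unfolding asymp_approx_def
proof (intro allI impI)
  fix e :: real assume "e > 0"
  then obtain d where "d > 0" "\<forall>y\<in>Y. 0 < norm y \<and> norm y < d \<longrightarrow> (\<exists>x\<in>X. norm (x - y) \<le> e * norm y)"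
    using assms(1) unfolding asymp_approx_def by blast
  then show "\<exists>d>0. \<forall>y\<in>Y'. 0 < norm y \<and> norm y < d \<longrightarrow> (\<exists>x\<in>X'. norm (x - y) \<le> e * norm y)"
    using assms(2,3) by blast
qed

lemma asymp_approx_Int_left:
  assumes "asymp_approx (Y \<inter> W) X" "open W" "0 \<in> W"
  shows "asymp_approx Y X"
  unfolding asymp_approx_def
proof (intro allI impI)
  fix e :: real assume "e > 0"
  obtain r where r: "r > 0" "ball 0 r \<subseteq> W" using assms(2,3) openE by blast
  obtain d where d: "d > 0" "\<forall>y\<in>Y \<inter> W. 0 < norm y \<and> norm y < d \<longrightarrow> (\<exists>x\<in>X. norm (x - y) \<le> e * norm y)"
    using assms(1) \<open>e > 0\<close> unfolding asymp_approx_def by blast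
  have "\<forall>y\<in>Y. 0 < norm y \<and> norm y < min d r \<longrightarrow> (\<exists>x\<in>X. norm (x - y) \<le> e * norm y)"
    using d(2) r(2) by auto
  then show "\<exists>d>0. \<forall>y\<in>Y. 0 < norm y \<and> norm y < d \<longrightarrow> (\<exists>x\<in>X. norm (x - y) \<le> e * norm y)"
    using d(1) r(1) by (intro exI[of _ "min d r"]) auto
qed

lemma asymp_approx_Int_right:
  assumes "asymp_approx Y X" "open W" "0 \<in> W"
  shows "asymp_approx Y (X \<inter> W)"
  unfolding asymp_approx_def
proof (intro allI impI)
  fix e :: real assume "e > 0"
  obtain r where r: "r > 0" "ball 0 r \<subseteq> W" using assms(2,3) openE by blast
  have "min e 1 > 0" using \<open>e > 0\<close> by simp
  then obtain d where d: "d > 0"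
      "\<forall>y\<in>Y. 0 < norm y \<and> norm y < d \<longrightarrow> (\<exists>x\<in>X. norm (x - y) \<le> min e 1 * norm y)"
    using assms(1) unfolding asymp_approx_def by blast
  have "\<exists>x\<in>X \<inter> W. norm (x - y) \<le> e * norm y"
    if y: "y \<in> Y" "0 < norm y" "norm y < min d (r/2)" for y
  proof -
    obtain x where x: "x \<in> X" "norm (x - y) \<le> min e 1 * norm y" using d y by auto
    have "min e 1 * norm y \<le> e * norm y" "min e 1 * norm y \<le> 1 * norm y"
      by (intro mult_right_mono; simp)+
    then have "norm (x - y) \<le> e * norm y" "norm (x - y) \<le> norm y" using x(2) by linarith+
    moreover have "norm x \<le> norm y + norm (x - y)" by (rule norm_triangle_sub)
    ultimately have "x \<in> W" using y(3) r(2) by auto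
    then show ?thesis using x(1) \<open>norm (x - y) \<le> e * norm y\<close> by blast
  qed
  then show "\<exists>d>0. \<forall>y\<in>Y. 0 < norm y \<and> norm y < d \<longrightarrow> (\<exists>x\<in>X \<inter> W. norm (x - y) \<le> e * norm y)"
    using d(1) r(1) by (intro exI[of _ "min d (r/2)"]) auto
qed

lemma asymp_equiv_Int_nhd_iff:
  assumes "open W" "0 \<in> W"
  shows "asymp_equiv X (Y \<inter> W) \<longleftrightarrow> asymp_equiv X Y"
  unfolding asymp_equiv_def
  by (meson Int_lower1 asymp_approx_Int_left asymp_approx_Int_right asymp_approx_mono
      assms order_refl)

lemma asymp_approx_dirs_subset:
  assumes "asymp_approx Y X" shows "dirs Y \<subseteq> dirs X"
proof
  fix u assume u: "u \<in> dirs Y"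
  have "\<exists>x\<in>X. x \<noteq> 0 \<and> norm x < d \<and> norm (x /\<^sub>R norm x - u) < e" if "e > 0" "d > 0" for e d
  proof -
    have "min (1/2) (e/8) > 0" using \<open>e > 0\<close> by simp
    then obtain d1 where d1: "d1 > 0"
        "\<forall>y\<in>Y. 0 < norm y \<and> norm y < d1 \<longrightarrow> (\<exists>x\<in>X. norm (x - y) \<le> min (1/2) (e/8) * norm y)"
      using assms unfolding asymp_approx_def by blast
    have "e/2 > 0" "min d1 (d/2) > 0" using that d1(1) by auto
    with u obtain y where y: "y \<in> Y" "y \<noteq> 0" "norm y < min d1 (d/2)" "norm (y /\<^sub>R norm y - u) < e/2"
      by (rule dirs_nearby_point)
    then obtain x where x: "x \<in> X" "norm (x - y) \<le> min (1/2) (e/8) * norm y" using d1 by auto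
    have "min (1/2) (e/8) * norm y \<le> 1/2 * norm y" "min (1/2) (e/8) * norm y \<le> e/8 * norm y"
      by (intro mult_right_mono; simp)+
    then have close: "norm (x - y) \<le> norm y / 2" "norm (x - y) \<le> e/8 * norm y" using x(2) by linarith+
    have "norm y \<le> norm x + norm (x - y)" "norm x \<le> norm y + norm (x - y)"
      by (metis norm_minus_commute norm_triangle_sub)+
    then have x_small: "x \<noteq> 0" "norm x < d" using close(1) y(2,3) by auto
    have "norm (x /\<^sub>R norm x - y /\<^sub>R norm y) \<le> 2 * norm (x - y) / norm y"
      using x_small(1) y(2) by (rule norm_normalize_diff_le)
    also have "\<dots> \<le> 2 * (e/8 * norm y) / norm y" using close(2) by (intro divide_right_mono) auto
    also have "\<dots> = e/4" using y(2) by simp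
    also have "\<dots> < e/2" using \<open>e > 0\<close> by simp
    finally have "norm (x /\<^sub>R norm x - u) < e/2 + e/2" by (rule norm_diff_triangle_less[OF _ y(4)])
    then show ?thesis using x(1) x_small by auto
  qed
  moreover have "norm u = 1" using u by (simp add: dirs_def)
  ultimately show "u \<in> dirs X" by (simp add: dirs_iff)
qed

lemma asymp_equiv_imp_LD_eq: "asymp_equiv X Y \<Longrightarrow> LD X = LD Y"
  unfolding asymp_equiv_def LD_def using asymp_approx_dirs_subset by blast

definition bilipschitz_on :: "real \<Rightarrow> real \<Rightarrow> 'a::real_normed_vector set \<Rightarrow> ('a \<Rightarrow> 'b::real_normed_vector) \<Rightarrow> bool" where
  "bilipschitz_on K1 K2 W f \<longleftrightarrow> 0 < K1 \<and> K1 \<le> K2 \<and>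
     (\<forall>x\<in>W. \<forall>y\<in>W. K1 * norm (x - y) \<le> norm (f x - f y) \<and> norm (f x - f y) \<le> K2 * norm (x - y))"

lemma bilipschitz_on_inverse:
  assumes "homeomorphism U V h g" "bilipschitz_on K1 K2 U h"
  shows "bilipschitz_on (1/K2) (1/K1) V g"
proof -
  have K: "0 < K1" "K1 \<le> K2" using assms(2) by (auto simp: bilipschitz_on_def)
  have "(1/K2) * norm (x - y) \<le> norm (g x - g y) \<and> norm (g x - g y) \<le> (1/K1) * norm (x - y)"
    if "x \<in> V" "y \<in> V" for x y
  proof -
    have "g x \<in> U" "g y \<in> U" "h (g x) = x" "h (g y) = y"
      using assms(1) that by (auto simp: homeomorphism_def)
    then have "K1 * norm (g x - g y) \<le> norm (x - y)" "norm (x - y) \<le> K2 * norm (g x - g y)"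
      using assms(2) unfolding bilipschitz_on_def by metis+
    then show ?thesis using K by (simp add: divide_le_eq le_divide_eq mult.commute)
  qed
  then show ?thesis using K by (simp add: bilipschitz_on_def frac_le)
qed

lemma asymp_approx_bilipschitz_image:
  assumes "asymp_approx Y X" "bilipschitz_on K1 K2 W f" "f 0 = 0" "0 \<in> W" "Y \<subseteq> W" "X \<subseteq> W"
  shows "asymp_approx (f ` Y) (f ` X)"
  unfolding asymp_approx_def
proof (intro allI impI)
  fix e :: real assume "e > 0"
  have K: "0 < K1" "0 < K2"
    and lip: "\<And>x y. x \<in> W \<Longrightarrow> y \<in> W \<Longrightarrow> K1 * norm (x - y) \<le> norm (f x - f y) \<and> norm (f x - f y) \<le> K2 * norm (x - y)"
    using assms(2) unfolding bilipschitz_on_def by auto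
  have "e * K1 / K2 > 0" using \<open>e > 0\<close> K by simp
  then obtain d where d: "d > 0"
      "\<forall>y\<in>Y. 0 < norm y \<and> norm y < d \<longrightarrow> (\<exists>x\<in>X. norm (x - y) \<le> (e * K1 / K2) * norm y)"
    using assms(1) unfolding asymp_approx_def by blast
  have "\<exists>x'\<in>f ` X. norm (x' - f y) \<le> e * norm (f y)"
    if y: "y \<in> Y" "0 < norm (f y)" "norm (f y) < K1 * d" for y
  proof -
    have "K1 * norm y \<le> norm (f y)" "norm (f y) \<le> K2 * norm y"
      using lip[of y 0] assms(3,4,5) y(1) by auto
    then have "K1 * norm y < K1 * d" "0 < K2 * norm y" using y(2,3) by linarith+
    then have "0 < norm y" "norm y < d" using K by (simp_all add: zero_less_mult_iff)
    then obtain x where x: "x \<in> X" "norm (x - y) \<le> (e * K1 / K2) * norm y" using d(2) y(1) by blast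
    have "norm (f x - f y) \<le> K2 * norm (x - y)" using lip assms(5,6) x(1) y(1) by blast
    also have "\<dots> \<le> K2 * ((e * K1 / K2) * norm y)" using x(2) K by (intro mult_left_mono) auto
    also have "\<dots> = e * (K1 * norm y)" using K by simp
    also have "\<dots> \<le> e * norm (f y)" using \<open>K1 * norm y \<le> norm (f y)\<close> \<open>e > 0\<close> by simp
    finally show ?thesis using x(1) by blast
  qed
  then show "\<exists>d>0. \<forall>y'\<in>f ` Y. 0 < norm y' \<and> norm y' < d \<longrightarrow> (\<exists>x'\<in>f ` X. norm (x' - y') \<le> e * norm y')"
    using K(1) d(1) by (intro exI[of _ "K1 * d"]) auto
qed

lemma asymp_equiv_homeomorphic_image_iff:
  assumes "homeomorphism U V h g" "bilipschitz_on K1 K2 U h" "h 0 = 0" "0 \<in> U" "P \<subseteq> U" "Q \<subseteq> U"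
  shows "asymp_equiv (h ` P) (h ` Q) \<longleftrightarrow> asymp_equiv P Q"
proof
  have gh: "g ` h ` S = S" if "S \<subseteq> U" for S
  proof -
    have "g ` h ` S = (\<lambda>x. g (h x)) ` S" by (simp add: image_image)
    also have "\<dots> = S" using assms(1) that by (auto simp: homeomorphism_def subset_iff)
    finally show ?thesis .
  qed
  have hV: "h ` S \<subseteq> V" if "S \<subseteq> U" for S
    using assms(1) that by (auto simp: homeomorphism_def)
  have "g 0 = 0" "0 \<in> V" using gh[of "{0}"] hV[of "{0}"] assms(3,4) by auto
  have g_image: "asymp_approx (g ` h ` S) (g ` h ` T)"
    if "asymp_approx (h ` S) (h ` T)" "S \<subseteq> U" "T \<subseteq> U" for S T
    using asymp_approx_bilipschitz_image[OF that(1) bilipschitz_on_inverse[OF assms(1,2)]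
        \<open>g 0 = 0\<close> \<open>0 \<in> V\<close> hV[OF that(2)] hV[OF that(3)]] .
  assume "asymp_equiv (h ` P) (h ` Q)"
  then show "asymp_equiv P Q"
    using g_image[of P Q] g_image[of Q P] gh[OF assms(5)] gh[OF assms(6)] assms(5,6)
    unfolding asymp_equiv_def by simp
next
  assume "asymp_equiv P Q"
  then show "asymp_equiv (h ` P) (h ` Q)"
    using asymp_approx_bilipschitz_image[OF _ assms(2,3,4)] assms(5,6) unfolding asymp_equiv_def by blast
qed

lemma not_asymp_approx_seq:
  fixes X Y :: "'a::euclidean_space set"
  assumes "\<not> asymp_approx Y X"
  obtains e y l where "e > 0" "\<And>n. y n \<in> Y - {0}" "y \<longlonglongrightarrow> 0" "l \<in> dirs Y"
    "(\<lambda>n. y n /\<^sub>R norm (y n)) \<longlonglongrightarrow> l" "\<And>n x. x \<in> X \<Longrightarrow> e * norm (y n) < norm (x - y n)"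
proof -
  obtain e where "e > 0" and far: "\<forall>d>0. \<exists>y\<in>Y. 0 < norm y \<and> norm y < d \<and> (\<forall>x\<in>X. e * norm y < norm (x - y))"
    using assms unfolding asymp_approx_def by (auto simp: not_le)
  then have "\<forall>n. \<exists>y\<in>Y. 0 < norm y \<and> norm y < 1 / Suc n \<and> (\<forall>x\<in>X. e * norm y < norm (x - y))"
    by simp
  then obtain f where f: "\<And>n. f n \<in> Y \<and> 0 < norm (f n) \<and> norm (f n) < 1 / Suc n \<and>
      (\<forall>x\<in>X. e * norm (f n) < norm (x - f n))" by metis
  have "\<forall>n. f n /\<^sub>R norm (f n) \<in> sphere 0 1" using f by simp
  from seq_compactE[OF compact_imp_seq_compact[OF compact_sphere] this]
  obtain l r where l: "l \<in> sphere 0 1" "strict_mono r"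
      "((\<lambda>n. f n /\<^sub>R norm (f n)) \<circ> r) \<longlonglongrightarrow> l" .
  have "f \<longlonglongrightarrow> 0" by (rule LIMSEQ_norm_0) (use f in auto)
  then have "(f \<circ> r) \<longlonglongrightarrow> 0" using LIMSEQ_subseq_LIMSEQ l(2) by blast
  moreover have "\<And>n. (f \<circ> r) n \<in> Y - {0}" using f by auto
  moreover have dir: "(\<lambda>n. (f \<circ> r) n /\<^sub>R norm ((f \<circ> r) n)) \<longlonglongrightarrow> l" using l(3) by (simp add: comp_def)
  ultimately have "l \<in> dirs Y" using l(1) unfolding dirs_def by blast
  show thesis
    by (rule that[OF \<open>e > 0\<close> _ \<open>(f \<circ> r) \<longlonglongrightarrow> 0\<close> \<open>l \<in> dirs Y\<close> dir]) (use f in auto)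
qed

lemma asymp_approx_LD:
  fixes X :: "'a::euclidean_space set"
  shows "asymp_approx X (LD X)"
proof (rule ccontr)
  assume "\<not> asymp_approx X (LD X)"
  then obtain e y l where e: "e > 0" and y: "\<And>n. y n \<in> X - {0}" "y \<longlonglongrightarrow> 0" and "l \<in> dirs X"
      and dir: "(\<lambda>n. y n /\<^sub>R norm (y n)) \<longlonglongrightarrow> l" and far: "\<And>n x. x \<in> LD X \<Longrightarrow> e * norm (y n) < norm (x - y n)"
    by (rule not_asymp_approx_seq) blast
  obtain n where n: "norm (y n /\<^sub>R norm (y n) - l) < e"
    using dir e by (auto simp: tendsto_iff dist_norm eventually_sequentially)
  have "y n \<noteq> 0" using y by auto
  then have "y n - norm (y n) *\<^sub>R l = norm (y n) *\<^sub>R (y n /\<^sub>R norm (y n) - l)"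
    by (simp add: algebra_simps)
  then have "norm (norm (y n) *\<^sub>R l - y n) = norm (y n) * norm (y n /\<^sub>R norm (y n) - l)"
    by (simp add: norm_minus_commute[of "norm (y n) *\<^sub>R l"])
  also have "\<dots> < e * norm (y n)" using n \<open>y n \<noteq> 0\<close> by simp
  finally show False using far[OF scaleR_dirs_in_LD[OF \<open>l \<in> dirs X\<close> norm_ge_zero[of "y n"]], of n] by simp
qed

lemma SSP_imp_asymp_approx_LD:
  fixes X :: "'a::euclidean_space set"
  assumes "SSP X" shows "asymp_approx (LD X) X"
proof (rule ccontr)
  assume "\<not> asymp_approx (LD X) X"
  then obtain e a u where e: "e > 0" and a: "\<And>m. a m \<in> LD X - {0}" "a \<longlonglongrightarrow> 0" and "u \<in> dirs (LD X)"
      and "(\<lambda>m. a m /\<^sub>R norm (a m)) \<longlonglongrightarrow> u" and far: "\<And>m x. x \<in> X \<Longrightarrow> e * norm (a m) < norm (x - a m)"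
    by (rule not_asymp_approx_seq) blast
  then obtain b where b: "\<And>m. b m \<in> X" "(\<lambda>m. norm (a m - b m) / norm (a m)) \<longlonglongrightarrow> 0"
    using assms unfolding SSP_def dirs_LD by blast
  obtain m where "norm (a m - b m) / norm (a m) < e"
    using b(2) e by (auto simp: tendsto_iff eventually_sequentially)
  moreover have "norm (a m) > 0" using a(1) by simp
  ultimately have "norm (b m - a m) < e * norm (a m)" by (simp add: divide_less_eq norm_minus_commute)
  then show False using far[OF b(1)] by (meson not_less_iff_gr_or_eq)
qed

lemma relative_error_tendsto_zero:
  fixes a b :: "nat \<Rightarrow> 'a::real_normed_vector"
  assumes "\<And>e. e > 0 \<Longrightarrow> \<forall>\<^sub>F m in sequentially. a m \<noteq> 0 \<and> norm (a m - b m) \<le> e * norm (a m)"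
  shows "(\<lambda>m. norm (a m - b m) / norm (a m)) \<longlonglongrightarrow> 0"
    and "(\<lambda>m. norm (a m - b m) / norm (b m)) \<longlonglongrightarrow> 0"
proof -
  have "\<forall>\<^sub>F m in sequentially. norm (a m - b m) / norm (a m) < e" if "e > 0" for e
    using assms[OF half_gt_zero[OF that]]
  proof eventually_elim
    case (elim m)
    then have "0 < e * norm (a m)" using that by simp
    then show ?case using elim by (simp add: divide_less_eq)
  qed
  then show "(\<lambda>m. norm (a m - b m) / norm (a m)) \<longlonglongrightarrow> 0"
    by (simp add: tendsto_iff)
  have "\<forall>\<^sub>F m in sequentially. norm (a m - b m) / norm (b m) < e" if "e > 0" for e
  proof -
    have "min (1/2) (e/4) > 0" using that by simp
    from assms[OF this] show ?thesis
    proof eventually_elim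
      case (elim m)
      have "min (1/2) (e/4) * norm (a m) \<le> 1/2 * norm (a m)" "min (1/2) (e/4) * norm (a m) \<le> e/4 * norm (a m)"
        by (intro mult_right_mono; simp)+
      moreover have "norm (a m) \<le> norm (b m) + norm (a m - b m)" by (rule norm_triangle_sub)
      ultimately have "norm (a m) \<le> 2 * norm (b m)" "norm (a m - b m) \<le> e/4 * norm (a m)"
        using elim by linarith+
      moreover have "e/4 * norm (a m) \<le> e/4 * (2 * norm (b m))"
        using calculation(1) \<open>e > 0\<close> by (intro mult_left_mono) auto
      moreover have "0 < norm (b m)" using calculation(1) elim by auto
      moreover from this have "0 < e * norm (b m)" using \<open>e > 0\<close> by simp
      ultimately show ?case by (simp add: divide_less_eq)
    qed
  qed
  then show "(\<lambda>m. norm (a m - b m) / norm (b m)) \<longlonglongrightarrow> 0"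
    by (simp add: tendsto_iff)
qed

lemma infdist_almost_attained:
  assumes "X \<noteq> {}" "infdist y X < r"
  obtains x where "x \<in> X" "dist y x < r"
proof -
  have "Inf (dist y ` X) < r" using assms by (simp add: infdist_notempty)
  then show thesis using that cInf_lessD[of "dist y ` X"] assms(1) by blast
qed

lemma asymp_approx_LD_infdist_small:
  assumes approx: "asymp_approx (LD X) X" and a: "a \<longlonglongrightarrow> 0" "(\<lambda>m. a m /\<^sub>R norm (a m)) \<longlonglongrightarrow> u"
    and "u \<in> dirs X" "e > 0"
  shows "\<forall>\<^sub>F m in sequentially. a m \<noteq> 0 \<and> infdist (a m) X \<le> e * norm (a m)"
proof -
  have "norm u = 1" using \<open>u \<in> dirs X\<close> by (simp add: dirs_def)
  have "e/2 > 0" using \<open>e > 0\<close> by simp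
  then obtain d where "d > 0" and d: "\<forall>y\<in>LD X. 0 < norm y \<and> norm y < d \<longrightarrow> (\<exists>x\<in>X. norm (x - y) \<le> e/2 * norm y)"
    using approx unfolding asymp_approx_def by blast
  have "\<forall>\<^sub>F m in sequentially. norm (a m) < d" using a(1) \<open>d > 0\<close> by (simp add: tendsto_iff)
  moreover have "\<forall>\<^sub>F m in sequentially. norm (a m /\<^sub>R norm (a m) - u) < min 1 (e/2)"
    using tendstoD[OF a(2), of "min 1 (e/2)"] \<open>e > 0\<close> by (simp add: dist_norm)
  ultimately show ?thesis
  proof eventually_elim
    case (elim m)
    then have "a m \<noteq> 0" using \<open>norm u = 1\<close> by auto
    define c where "c = norm (a m) *\<^sub>R u"
    have "a m - c = norm (a m) *\<^sub>R (a m /\<^sub>R norm (a m) - u)"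
      using \<open>a m \<noteq> 0\<close> by (simp add: c_def algebra_simps)
    then have "dist (a m) c = norm (a m) * norm (a m /\<^sub>R norm (a m) - u)"
      by (simp add: dist_norm)
    also have "\<dots> \<le> norm (a m) * (e/2)" using elim(2) by (intro mult_left_mono) auto
    finally have ac: "dist (a m) c \<le> e/2 * norm (a m)" by (simp add: mult.commute)
    have "c \<in> LD X" "norm c = norm (a m)"
      using scaleR_dirs_in_LD[OF \<open>u \<in> dirs X\<close>] \<open>norm u = 1\<close> by (auto simp: c_def)
    then obtain x where "x \<in> X" "dist c x \<le> e/2 * norm (a m)"
      using d elim(1) \<open>a m \<noteq> 0\<close> by (fastforce simp: dist_norm norm_minus_commute)
    then have "infdist c X \<le> e/2 * norm (a m)" by (rule infdist_le2)
    then show ?case using infdist_triangle[of "a m" X c] ac \<open>a m \<noteq> 0\<close> by linarith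
  qed
qed

lemma asymp_approx_LD_imp_SSP:
  assumes approx: "asymp_approx (LD X) X" shows "SSP X"
  unfolding SSP_def
proof (intro allI impI)
  fix a :: "nat \<Rightarrow> 'a" assume "a \<longlonglongrightarrow> 0 \<and> (\<exists>u\<in>dirs X. (\<lambda>m. a m /\<^sub>R norm (a m)) \<longlonglongrightarrow> u)"
  then obtain u where a: "a \<longlonglongrightarrow> 0" "(\<lambda>m. a m /\<^sub>R norm (a m)) \<longlonglongrightarrow> u" and "u \<in> dirs X" by blast
  then have "X \<noteq> {}" by (auto simp: dirs_def)
  have "\<exists>x. x \<in> X \<and> (a m \<noteq> 0 \<longrightarrow> dist (a m) x < infdist (a m) X + norm (a m) / Suc m)" for m
  proof (cases "a m = 0")
    case False
    then have "infdist (a m) X < infdist (a m) X + norm (a m) / Suc m" by simp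
    with \<open>X \<noteq> {}\<close> obtain x where "x \<in> X" "dist (a m) x < infdist (a m) X + norm (a m) / Suc m"
      by (rule infdist_almost_attained)
    then show ?thesis by blast
  qed (use \<open>X \<noteq> {}\<close> in blast)
  then obtain b where b: "\<And>m. b m \<in> X"
    "\<And>m. a m \<noteq> 0 \<Longrightarrow> dist (a m) (b m) < infdist (a m) X + norm (a m) / Suc m"
    using choice[of "\<lambda>m x. x \<in> X \<and> (a m \<noteq> 0 \<longrightarrow> dist (a m) x < infdist (a m) X + norm (a m) / Suc m)"]
    by blast
  have "\<forall>\<^sub>F m in sequentially. a m \<noteq> 0 \<and> norm (a m - b m) \<le> e * norm (a m)" if "e > 0" for e
  proof -
    have "e/2 > 0" using that by simp
    have "\<forall>\<^sub>F m in sequentially. a m \<noteq> 0 \<and> infdist (a m) X \<le> e/2 * norm (a m)"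
      using asymp_approx_LD_infdist_small[OF approx a \<open>u \<in> dirs X\<close> \<open>e/2 > 0\<close>] .
    moreover have "\<forall>\<^sub>F m in sequentially. 1 / Suc m < e/2"
      using order_tendstoD(2)[OF LIMSEQ_inverse_real_of_nat \<open>e/2 > 0\<close>] by (simp add: inverse_eq_divide)
    ultimately show ?thesis
    proof eventually_elim
      case (elim m)
      have "norm (a m) / Suc m = norm (a m) * (1 / Suc m)" by simp
      also have "\<dots> \<le> norm (a m) * (e/2)" using elim(2) by (intro mult_left_mono) auto
      finally have "norm (a m) / Suc m \<le> e/2 * norm (a m)" by (simp add: mult.commute)
      then have "dist (a m) (b m) < e * norm (a m)" using elim(1) b(2)[of m] by linarith
      then show ?case using elim(1) by (simp add: dist_norm)
    qed
  qed
  then show "\<exists>b. (\<forall>m. b m \<in> X) \<and> (\<lambda>m. norm (a m - b m) / norm (a m)) \<longlonglongrightarrow> 0 \<and>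
      (\<lambda>m. norm (a m - b m) / norm (b m)) \<longlonglongrightarrow> 0"
    using b(1) relative_error_tendsto_zero by blast
qed

lemma LD_eq_SSP_iff_asymp_equiv:
  fixes X E :: "'a::euclidean_space set"
  assumes "LD E = E"
  shows "LD X = E \<and> SSP X \<longleftrightarrow> asymp_equiv X E"
proof
  assume "LD X = E \<and> SSP X"
  then show "asymp_equiv X E"
    using asymp_approx_LD[of X] SSP_imp_asymp_approx_LD[of X] by (auto simp: asymp_equiv_def)
next
  assume equiv: "asymp_equiv X E"
  have "LD X = E" using asymp_equiv_imp_LD_eq[OF equiv] assms by simp
  moreover have "SSP X"
    using equiv calculation asymp_approx_LD_imp_SSP by (auto simp: asymp_equiv_def)
  ultimately show "LD X = E \<and> SSP X" ..
qed

theorem proposition2p14: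
  fixes h g :: "'a::euclidean_space \<Rightarrow> 'a" and U V :: "'a set" and A :: "'a set"
    and K1 K2 :: real
  assumes "open U" and "open V" and "0 \<in> U" and "h 0 = 0"
    and "homeomorphism U V h g"
    and "0 < K1" and "K1 \<le> K2"
    and "\<forall>x\<in>U. \<forall>y\<in>U. K1 * norm (x - y) \<le> norm (h x - h y) \<and>
                        norm (h x - h y) \<le> K2 * norm (x - y)"
    and "0 \<in> closure A"
  shows "(LD (h ` (A \<inter> U)) = LD (h ` (LD A \<inter> U)) \<and> SSP (h ` (LD A \<inter> U)))
     \<longleftrightarrow> (LD (g ` (LD (h ` (A \<inter> U)) \<inter> V)) = LD A \<and> SSP (g ` (LD (h ` (A \<inter> U)) \<inter> V)))"
proof -
  let ?C = "LD A" and ?E = "LD (h ` (A \<inter> U))"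
  let ?X = "h ` (?C \<inter> U)" and ?Y = "g ` (?E \<inter> V)"
  have bilip: "bilipschitz_on K1 K2 U h" using assms(6-8) by (simp add: bilipschitz_on_def)
  have "?Y \<subseteq> U" "0 \<in> V" using assms(3-5) by (auto simp: homeomorphism_def)
  have "h ` ?Y = (\<lambda>y. h (g y)) ` (?E \<inter> V)" by (simp add: image_image)
  also have "\<dots> = ?E \<inter> V" using assms(5) by (auto simp: homeomorphism_def)
  finally have "h ` ?Y = ?E \<inter> V" .
  have "(?E = LD ?X \<and> SSP ?X) \<longleftrightarrow> asymp_equiv ?X ?E"
    using LD_eq_SSP_iff_asymp_equiv[OF LD_LD] by blast
  also have "\<dots> \<longleftrightarrow> asymp_equiv ?X (h ` ?Y)"
    using asymp_equiv_Int_nhd_iff[OF assms(2) \<open>0 \<in> V\<close>] \<open>h ` ?Y = ?E \<inter> V\<close> by simp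
  also have "\<dots> \<longleftrightarrow> asymp_equiv (?C \<inter> U) ?Y"
    using asymp_equiv_homeomorphic_image_iff[OF assms(5) bilip assms(4,3) _ \<open>?Y \<subseteq> U\<close>] by blast
  also have "\<dots> \<longleftrightarrow> asymp_equiv ?Y ?C"
    using asymp_equiv_Int_nhd_iff[OF assms(1,3)] asymp_equiv_sym by blast
  also have "\<dots> \<longleftrightarrow> (LD ?Y = ?C \<and> SSP ?Y)"
    using LD_eq_SSP_iff_asymp_equiv[OF LD_LD] by blast
  finally show ?thesis by (simp add: eq_commute)
qed

end
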